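(* Let $W$ be a channel from $\{1,\dots,m\}$ to $\{1,\dots,n\}$. Let \[ \mathfrak{U}_+=\Big\{\mathrm{supp}((\alpha)_+):\alpha\in\mathbb{R}^{\mathcal{D}},\ \sum_D\alpha_DD=0,\ \sum_D\alpha_D\log_2\mathrm{rank}(D)>0\Big\}, \] \[ \mathfrak{U}_-=\Big\{\mathrm{supp}((\alpha)_-):\alpha\in\mathbb{R}^{\mathcal{D}},\ \sum_D\alpha_DD=0,\ \sum_D\alpha_D\log_2\mathrm{rank}(D)>0\Big\}. \] For $\lambda\in\Lambda(W)$: $C_{11}(\lambda)=\underline{C}_{11}(W)$ if and only if there is no $U\in\mathfrak{U}_+$ with $U\subseteq\mathrm{supp}(\lambda)$; and $C_{11}(\lambda)=\overline{C}_{11}(W)$ if and only if there is no $U\in\mathfrak{U}_-$ with $U\subseteq\mathrm{supp}(\lambda)$.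
   Context: A channel is a row-stochastic matrix; a deterministic channel from $\{1,\dots,m\}$ to $\{1,\dots,n\}$ is one with 0-1 entries; $\mathcal{D}$ is the set of them, $\mathrm{rank}(D)$ the matrix rank. $\Lambda(W)=\{\lambda\text{ probability distribution on }\mathcal{D}: W=\sum_D\lambda_DD\}$. $C_{11}(\lambda)=\sum_D\lambda_D\log_2\mathrm{rank}(D)$, $\underline{C}_{11}(W)=\inf_{\lambda\in\Lambda(W)}C_{11}(\lambda)$, $\overline{C}_{11}(W)=\sup_{\lambda\in\Lambda(W)}C_{11}(\lambda)$. For $\alpha\in\mathbb{R}^{\mathcal{D}}$, $(\alpha)_+=(\max(\alpha_D,0))_D$, $(\alpha)_-=(\min(\alpha_D,0))_D$, and $\mathrm{supp}(\alpha)=\{D:\alpha_D\neq0\}$. *)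

theory Defs
  imports "HOL-Analysis.Analysis"
begin

text \<open>Channels from {1..m} to {1..n} are represented as real matrices of type
  real^'n^'m (row index 'm = inputs, column index 'n = outputs), with finite
  index types 'm and 'n.\<close>

definition channel :: "real^'n::finite^'m::finite \<Rightarrow> bool" where
  "channel W \<longleftrightarrow> (\<forall>i j. W $ i $ j \<ge> 0) \<and> (\<forall>i. (\<Sum>j\<in>UNIV. W $ i $ j) = 1)"

definition det_channels :: "(real^'n::finite^'m::finite) set" where
  "det_channels = {D. channel D \<and> (\<forall>i j. D $ i $ j = 0 \<or> D $ i $ j = 1)}"

definition Lambda :: "real^'n::finite^'m::finite \<Rightarrow> (real^'n^'m \<Rightarrow> real) set" where
  "Lambda W = {lam. (\<forall>D\<in>det_channels. lam D \<ge> 0) \<and> (\<forall>D. D \<notin> det_channels \<longrightarrow> lam D = 0)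
      \<and> (\<Sum>D\<in>det_channels. lam D) = 1 \<and> (\<Sum>D\<in>det_channels. lam D *\<^sub>R D) = W}"

definition C11 :: "(real^'n::finite^'m::finite \<Rightarrow> real) \<Rightarrow> real" where
  "C11 lam = (\<Sum>D\<in>det_channels. lam D * log 2 (real (rank D)))"

definition lowerC11 :: "real^'n::finite^'m::finite \<Rightarrow> real" where
  "lowerC11 W = Inf (C11 ` Lambda W)"

definition upperC11 :: "real^'n::finite^'m::finite \<Rightarrow> real" where
  "upperC11 W = Sup (C11 ` Lambda W)"

definition supp :: "(real^'n::finite^'m::finite \<Rightarrow> real) \<Rightarrow> (real^'n^'m) set" where
  "supp a = {D\<in>det_channels. a D \<noteq> 0}"

definition pos_part :: "('a \<Rightarrow> real) \<Rightarrow> 'a \<Rightarrow> real" where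
  "pos_part a = (\<lambda>D. max (a D) 0)"

definition neg_part :: "('a \<Rightarrow> real) \<Rightarrow> 'a \<Rightarrow> real" where
  "neg_part a = (\<lambda>D. min (a D) 0)"

definition admissible :: "(real^'n::finite^'m::finite \<Rightarrow> real) \<Rightarrow> bool" where
  "admissible a \<longleftrightarrow> (\<Sum>D\<in>det_channels. a D *\<^sub>R D) = 0
      \<and> (\<Sum>D\<in>det_channels. a D * log 2 (real (rank D))) > 0"

definition U_plus :: "(real^'n::finite^'m::finite) set set" where
  "U_plus = {supp (pos_part a) | a. admissible a}"

definition U_minus :: "(real^'n::finite^'m::finite) set set" where
  "U_minus = {supp (neg_part a) | a. admissible a}"

end

theory Submission
  imports Defs
begin

text \<open>\<open>\<Lambda>(W)\<close> is a polytope on which \<open>C\<^sub>1\<^sub>1\<close> is a linear functional, so \<open>\<lambda>\<close> is a minimiser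
  iff there is no feasible descent direction at \<open>\<lambda>\<close>. A direction \<open>-\<alpha>\<close> with \<open>\<Sum>\<alpha>\<^sub>D D = 0\<close> is
  feasible iff a small step along it keeps all weights nonnegative, i.e. iff the coordinates
  it decreases, \<open>supp((\<alpha>)\<^sub>+)\<close>, lie in \<open>supp(\<lambda>)\<close>; conversely the difference of \<open>\<lambda>\<close> and a better
  point of \<open>\<Lambda>(W)\<close> is such an \<open>\<alpha>\<close>. Maximisers are handled by negating the objective.\<close>

lemma finite_det_channels: "finite (det_channels :: (real^'n::finite^'m::finite) set)"
proof -
  let ?mat = "\<lambda>f. (\<chi> i j. if f i j then 1 else 0) :: real^'n^'m"
  have "det_channels \<subseteq> range ?mat"
  proof
    fix D :: "real^'n^'m" assume "D \<in> det_channels"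
    hence "\<forall>i j. D $ i $ j = 0 \<or> D $ i $ j = 1" by (simp add: det_channels_def)
    hence "D = ?mat (\<lambda>i j. D $ i $ j = 1)" by (simp add: vec_eq_iff) metis
    thus "D \<in> range ?mat" by (rule range_eqI[where x = "\<lambda>i j. D $ i $ j = 1"])
  qed
  thus ?thesis by (rule finite_subset) simp
qed

text \<open>Every deterministic channel has row sums 1, so reading off any row of \<open>\<Sum>\<alpha>\<^sub>D D\<close> gives \<open>\<Sum>\<alpha>\<^sub>D\<close>.\<close>
lemma sum_coeffs_eq_0_if_mixture_eq_0:
  fixes a :: "real^'n::finite^'m::finite \<Rightarrow> real"
  assumes "(\<Sum>D\<in>det_channels. a D *\<^sub>R D) = 0"
  shows "(\<Sum>D\<in>det_channels. a D) = 0"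
proof -
  fix i :: 'm
  have "0 = (\<Sum>j\<in>UNIV. (\<Sum>D\<in>det_channels. a D *\<^sub>R D) $ i $ j)" using assms by simp
  also have "\<dots> = (\<Sum>D\<in>det_channels. a D * (\<Sum>j\<in>UNIV. D $ i $ j))"
    by (simp add: sum.swap[of _ UNIV] sum_distrib_left)
  also have "\<dots> = (\<Sum>D\<in>det_channels. a D)"
    by (rule sum.cong) (auto simp: det_channels_def channel_def)
  finally show ?thesis by simp
qed

lemma Lambda_step_in_Lambda:
  fixes lam b :: "real^'n::finite^'m::finite \<Rightarrow> real"
  assumes lam: "lam \<in> Lambda W" and b0: "(\<Sum>D\<in>det_channels. b D *\<^sub>R D) = 0"
    and e: "\<And>D. D \<in> det_channels \<Longrightarrow> e * b D \<le> lam D"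
  shows "(\<lambda>D. if D \<in> det_channels then lam D - e * b D else 0) \<in> Lambda W"
proof -
  have "(\<Sum>D\<in>det_channels. lam D - e * b D) = 1"
    using lam sum_coeffs_eq_0_if_mixture_eq_0[OF b0]
    by (simp add: Lambda_def sum_subtractf flip: sum_distrib_left)
  moreover have "(\<Sum>D\<in>det_channels. (e * b D) *\<^sub>R D) = e *\<^sub>R (\<Sum>D\<in>det_channels. b D *\<^sub>R D)"
    by (simp add: scaleR_sum_right)
  then have "(\<Sum>D\<in>det_channels. (lam D - e * b D) *\<^sub>R D) = W"
    using lam b0 by (simp add: Lambda_def scaleR_diff_left sum_subtractf)
  ultimately show ?thesis using e by (simp add: Lambda_def cong: sum.cong)
qed

lemma exists_step_in_Lambda:
  fixes lam b :: "real^'n::finite^'m::finite \<Rightarrow> real"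
  assumes lam: "lam \<in> Lambda W" and b0: "(\<Sum>D\<in>det_channels. b D *\<^sub>R D) = 0"
    and supp: "\<forall>D\<in>det_channels. b D > 0 \<longrightarrow> lam D \<noteq> 0"
  obtains e where "e > 0" "(\<lambda>D. if D \<in> det_channels then lam D - e * b D else 0) \<in> Lambda W"
proof -
  let ?S = "{D\<in>det_channels. b D > 0}"
  define e where "e = Min (insert 1 ((\<lambda>D. lam D / b D) ` ?S))"
  have lam_pos: "lam D > 0" if "D \<in> ?S" for D
    using that supp lam by (force simp: Lambda_def)
  have finite_S: "finite ?S" using finite_det_channels by (rule finite_subset[rotated]) blast
  have "e > 0" unfolding e_def using finite_S lam_pos by (subst Min_gr_iff) auto
  moreover have "e * b D \<le> lam D" if "D \<in> det_channels" for D
  proof (cases "b D > 0")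
    case True
    hence "e \<le> lam D / b D" unfolding e_def using finite_S that by (intro Min_le) auto
    thus ?thesis using True by (simp add: pos_le_divide_eq)
  next
    case False
    hence "e * b D \<le> 0" using \<open>e > 0\<close> by (simp add: mult_nonneg_nonpos)
    moreover have "0 \<le> lam D" using lam that by (simp add: Lambda_def)
    ultimately show ?thesis by linarith
  qed
  ultimately show ?thesis using that Lambda_step_in_Lambda[OF lam b0] by blast
qed

theorem exists_Lambda_less_iff_descent_direction:
  fixes lam :: "real^'n::finite^'m::finite \<Rightarrow> real" and f :: "real^'n^'m \<Rightarrow> real"
  assumes lam: "lam \<in> Lambda W"
  shows "(\<exists>l\<in>Lambda W. (\<Sum>D\<in>det_channels. l D * f D) < (\<Sum>D\<in>det_channels. lam D * f D))
     \<longleftrightarrow> (\<exists>b. (\<Sum>D\<in>det_channels. b D *\<^sub>R D) = 0 \<and> (\<Sum>D\<in>det_channels. b D * f D) > 0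
             \<and> (\<forall>D\<in>det_channels. b D > 0 \<longrightarrow> lam D \<noteq> 0))"
proof
  assume "\<exists>l\<in>Lambda W. (\<Sum>D\<in>det_channels. l D * f D) < (\<Sum>D\<in>det_channels. lam D * f D)"
  then obtain l where l: "l \<in> Lambda W"
    and less: "(\<Sum>D\<in>det_channels. l D * f D) < (\<Sum>D\<in>det_channels. lam D * f D)" by blast
  let ?b = "\<lambda>D. lam D - l D"
  have "(\<Sum>D\<in>det_channels. ?b D *\<^sub>R D) = 0"
    using lam l by (simp add: Lambda_def scaleR_diff_left sum_subtractf)
  moreover have "(\<Sum>D\<in>det_channels. ?b D * f D) > 0"
    using less by (simp add: left_diff_distrib sum_subtractf)
  moreover have "\<forall>D\<in>det_channels. ?b D > 0 \<longrightarrow> lam D \<noteq> 0"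
    using l by (auto simp: Lambda_def)
  ultimately show "\<exists>b. (\<Sum>D\<in>det_channels. b D *\<^sub>R D) = 0 \<and> (\<Sum>D\<in>det_channels. b D * f D) > 0
             \<and> (\<forall>D\<in>det_channels. b D > 0 \<longrightarrow> lam D \<noteq> 0)" by (auto intro!: exI[of _ ?b])
next
  assume "\<exists>b. (\<Sum>D\<in>det_channels. b D *\<^sub>R D) = 0 \<and> (\<Sum>D\<in>det_channels. b D * f D) > 0
             \<and> (\<forall>D\<in>det_channels. b D > 0 \<longrightarrow> lam D \<noteq> 0)"
  then obtain b where b0: "(\<Sum>D\<in>det_channels. b D *\<^sub>R D) = 0"
    and descent: "(\<Sum>D\<in>det_channels. b D * f D) > 0"
    and supp: "\<forall>D\<in>det_channels. b D > 0 \<longrightarrow> lam D \<noteq> 0" by blast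
  obtain e where "e > 0"
    and step: "(\<lambda>D. if D \<in> det_channels then lam D - e * b D else 0) \<in> Lambda W"
    using exists_step_in_Lambda[OF lam b0 supp] by blast
  have "(\<Sum>D\<in>det_channels. (if D \<in> det_channels then lam D - e * b D else 0) * f D)
      = (\<Sum>D\<in>det_channels. lam D * f D) - e * (\<Sum>D\<in>det_channels. b D * f D)"
    by (simp add: left_diff_distrib sum_subtractf sum_distrib_left mult.assoc)
  also have "\<dots> < (\<Sum>D\<in>det_channels. lam D * f D)" using \<open>e > 0\<close> descent by simp
  finally show "\<exists>l\<in>Lambda W. (\<Sum>D\<in>det_channels. l D * f D) < (\<Sum>D\<in>det_channels. lam D * f D)"
    using step by (rule bexI)
qed

corollary exists_Lambda_greater_iff_ascent_direction:
  fixes lam :: "real^'n::finite^'m::finite \<Rightarrow> real" and f :: "real^'n^'m \<Rightarrow> real"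
  assumes lam: "lam \<in> Lambda W"
  shows "(\<exists>l\<in>Lambda W. (\<Sum>D\<in>det_channels. l D * f D) > (\<Sum>D\<in>det_channels. lam D * f D))
     \<longleftrightarrow> (\<exists>a. (\<Sum>D\<in>det_channels. a D *\<^sub>R D) = 0 \<and> (\<Sum>D\<in>det_channels. a D * f D) > 0
             \<and> (\<forall>D\<in>det_channels. a D < 0 \<longrightarrow> lam D \<noteq> 0))"
proof -
  have "(\<exists>l\<in>Lambda W. (\<Sum>D\<in>det_channels. l D * f D) > (\<Sum>D\<in>det_channels. lam D * f D))
     \<longleftrightarrow> (\<exists>l\<in>Lambda W. (\<Sum>D\<in>det_channels. l D * - f D) < (\<Sum>D\<in>det_channels. lam D * - f D))"
    by (simp add: sum_negf)
  also have "\<dots> \<longleftrightarrow> (\<exists>b. (\<Sum>D\<in>det_channels. b D *\<^sub>R D) = 0 \<and> (\<Sum>D\<in>det_channels. b D * - f D) > 0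
             \<and> (\<forall>D\<in>det_channels. b D > 0 \<longrightarrow> lam D \<noteq> 0))"
    by (rule exists_Lambda_less_iff_descent_direction[OF lam])
  also have "\<dots> \<longleftrightarrow> (\<exists>a. (\<Sum>D\<in>det_channels. a D *\<^sub>R D) = 0 \<and> (\<Sum>D\<in>det_channels. a D * f D) > 0
             \<and> (\<forall>D\<in>det_channels. a D < 0 \<longrightarrow> lam D \<noteq> 0))"
    (is "(\<exists>b. ?descent b) \<longleftrightarrow> (\<exists>a. ?ascent a)")
  proof
    assume "\<exists>b. ?descent b"
    then obtain b where "?descent b" ..
    hence "?ascent (\<lambda>D. - b D)" by (simp add: sum_negf)
    thus "\<exists>a. ?ascent a" by (rule exI[where x = "\<lambda>D. - b D"])
  next
    assume "\<exists>a. ?ascent a"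
    then obtain a where "?ascent a" ..
    hence "?descent (\<lambda>D. - a D)" by (simp add: sum_negf)
    thus "\<exists>b. ?descent b" by (rule exI[where x = "\<lambda>D. - a D"])
  qed
  finally show ?thesis .
qed

lemma abs_C11_le:
  fixes l :: "real^'n::finite^'m::finite \<Rightarrow> real"
  assumes "l \<in> Lambda W"
  shows "\<bar>C11 l\<bar> \<le> (\<Sum>D\<in>(det_channels :: (real^'n^'m) set). \<bar>log 2 (real (rank D))\<bar>)"
proof -
  have l_bounds: "0 \<le> l D" "l D \<le> 1" if "D \<in> det_channels" for D
  proof -
    show "0 \<le> l D" using assms that by (simp add: Lambda_def)
    have "l D \<le> (\<Sum>D\<in>det_channels. l D)"
      using assms that finite_det_channels by (intro member_le_sum) (auto simp: Lambda_def)
    thus "l D \<le> 1" using assms by (simp add: Lambda_def)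
  qed
  have "\<bar>C11 l\<bar> \<le> (\<Sum>D\<in>det_channels. \<bar>l D * log 2 (real (rank D))\<bar>)"
    unfolding C11_def by (rule sum_abs)
  also have "\<dots> \<le> (\<Sum>D\<in>(det_channels :: (real^'n^'m) set). \<bar>log 2 (real (rank D))\<bar>)"
  proof (rule sum_mono)
    fix D :: "real^'n^'m" assume "D \<in> det_channels"
    thus "\<bar>l D * log 2 (real (rank D))\<bar> \<le> \<bar>log 2 (real (rank D))\<bar>"
      using l_bounds by (simp add: abs_mult mult_left_le_one_le)
  qed
  finally show ?thesis .
qed

lemma bounded_C11_Lambda: "bounded (C11 ` Lambda (W :: real^'n::finite^'m::finite))"
proof -
  have "\<forall>x\<in>C11 ` Lambda W. \<bar>x\<bar> \<le> (\<Sum>D\<in>(det_channels :: (real^'n^'m) set). \<bar>log 2 (real (rank D))\<bar>)"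
    using abs_C11_le by blast
  thus ?thesis unfolding bounded_real by blast
qed

lemma C11_eq_lowerC11_iff:
  assumes "lam \<in> Lambda W"
  shows "C11 lam = lowerC11 W \<longleftrightarrow> (\<forall>l\<in>Lambda W. C11 lam \<le> C11 l)"
proof
  assume "C11 lam = lowerC11 W"
  thus "\<forall>l\<in>Lambda W. C11 lam \<le> C11 l"
    unfolding lowerC11_def by (auto intro!: cInf_lower bounded_imp_bdd_below bounded_C11_Lambda)
next
  assume "\<forall>l\<in>Lambda W. C11 lam \<le> C11 l"
  thus "C11 lam = lowerC11 W"
    unfolding lowerC11_def using assms by (intro cInf_eq_minimum[symmetric]) auto
qed

lemma C11_eq_upperC11_iff:
  assumes "lam \<in> Lambda W"
  shows "C11 lam = upperC11 W \<longleftrightarrow> (\<forall>l\<in>Lambda W. C11 l \<le> C11 lam)"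
proof
  assume "C11 lam = upperC11 W"
  thus "\<forall>l\<in>Lambda W. C11 l \<le> C11 lam"
    unfolding upperC11_def by (auto intro!: cSup_upper bounded_imp_bdd_above bounded_C11_Lambda)
next
  assume "\<forall>l\<in>Lambda W. C11 l \<le> C11 lam"
  thus "C11 lam = upperC11 W"
    unfolding upperC11_def using assms by (intro cSup_eq_maximum[symmetric]) auto
qed

lemma supp_pos_part: "supp (pos_part a) = {D\<in>det_channels. a D > 0}"
  by (auto simp: supp_def pos_part_def max_def)

lemma supp_neg_part: "supp (neg_part a) = {D\<in>det_channels. a D < 0}"
  by (auto simp: supp_def neg_part_def min_def)

lemma ex_U_plus_subset_supp_iff:
  "(\<exists>U\<in>(U_plus :: (real^'n::finite^'m::finite) set set). U \<subseteq> supp lam)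
     \<longleftrightarrow> (\<exists>a. admissible a \<and> (\<forall>D\<in>det_channels. a D > 0 \<longrightarrow> lam D \<noteq> 0))"
    (is "?U \<longleftrightarrow> (\<exists>a. ?P a)")
proof
  assume ?U
  then obtain a where "admissible a" "supp (pos_part a) \<subseteq> supp lam"
    unfolding U_plus_def by blast
  hence "?P a" by (auto simp: supp_pos_part supp_def[of lam])
  thus "\<exists>a. ?P a" by blast
next
  assume "\<exists>a. ?P a"
  then obtain a where "?P a" ..
  hence "supp (pos_part a) \<in> U_plus" "supp (pos_part a) \<subseteq> supp lam"
    by (auto simp: U_plus_def supp_pos_part supp_def[of lam])
  thus ?U by blast
qed

lemma ex_U_minus_subset_supp_iff:
  "(\<exists>U\<in>(U_minus :: (real^'n::finite^'m::finite) set set). U \<subseteq> supp lam)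
     \<longleftrightarrow> (\<exists>a. admissible a \<and> (\<forall>D\<in>det_channels. a D < 0 \<longrightarrow> lam D \<noteq> 0))"
    (is "?U \<longleftrightarrow> (\<exists>a. ?P a)")
proof
  assume ?U
  then obtain a where "admissible a" "supp (neg_part a) \<subseteq> supp lam"
    unfolding U_minus_def by blast
  hence "?P a" by (auto simp: supp_neg_part supp_def[of lam])
  thus "\<exists>a. ?P a" by blast
next
  assume "\<exists>a. ?P a"
  then obtain a where "?P a" ..
  hence "supp (neg_part a) \<in> U_minus" "supp (neg_part a) \<subseteq> supp lam"
    by (auto simp: U_minus_def supp_neg_part supp_def[of lam])
  thus ?U by blast
qed

theorem proposition2:
  fixes W :: "real^'n::finite^'m::finite" and lam :: "real^'n^'m \<Rightarrow> real"
  assumes "channel W" and "lam \<in> Lambda W"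
  shows "(C11 lam = lowerC11 W \<longleftrightarrow> \<not> (\<exists>U\<in>(U_plus :: (real^'n^'m) set set). U \<subseteq> supp lam))
       \<and> (C11 lam = upperC11 W \<longleftrightarrow> \<not> (\<exists>U\<in>(U_minus :: (real^'n^'m) set set). U \<subseteq> supp lam))"
proof
  let ?log_rank = "\<lambda>D :: real^'n^'m. log 2 (real (rank D))"
  have "C11 lam = lowerC11 W \<longleftrightarrow> \<not> (\<exists>l\<in>Lambda W. C11 l < C11 lam)"
    unfolding C11_eq_lowerC11_iff[OF assms(2)] by (auto simp: not_less)
  also have "\<dots> \<longleftrightarrow> \<not> (\<exists>a. admissible a \<and> (\<forall>D\<in>det_channels. a D > 0 \<longrightarrow> lam D \<noteq> 0))"
    using exists_Lambda_less_iff_descent_direction[OF assms(2), of ?log_rank]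
    unfolding C11_def admissible_def by (simp add: conj_assoc)
  finally show "C11 lam = lowerC11 W \<longleftrightarrow> \<not> (\<exists>U\<in>(U_plus :: (real^'n^'m) set set). U \<subseteq> supp lam)"
    by (simp add: ex_U_plus_subset_supp_iff)
  have "C11 lam = upperC11 W \<longleftrightarrow> \<not> (\<exists>l\<in>Lambda W. C11 l > C11 lam)"
    unfolding C11_eq_upperC11_iff[OF assms(2)] by (auto simp: not_less)
  also have "\<dots> \<longleftrightarrow> \<not> (\<exists>a. admissible a \<and> (\<forall>D\<in>det_channels. a D < 0 \<longrightarrow> lam D \<noteq> 0))"
    using exists_Lambda_greater_iff_ascent_direction[OF assms(2), of ?log_rank]
    unfolding C11_def admissible_def by (simp add: conj_assoc)
  finally show "C11 lam = upperC11 W \<longleftrightarrow> \<not> (\<exists>U\<in>(U_minus :: (real^'n^'m) set set). U \<subseteq> supp lam)"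
    by (simp add: ex_U_minus_subset_supp_iff)
qed

end
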